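(* Let $E$ be a separable Banach space over $K$ and $G$ a compact $D$-submodule of $E$. If $X$ is an $E$-valued random variable whose law is normalised Haar measure on $G$, then $X$ is $K$-Gaussian and $G=\{x\in E:|T(x)|\le\|T(X)\|_\infty\ \text{for all }T\in E^*\}$.
   Context: $K$ is a local field (locally compact, non-discrete, totally disconnected topological field) with its non-archimedean absolute value $|\cdot|$ ($|x|=0\iff x=0$, $|xy|=|x||y|$, $|x+y|\le|x|\vee|y|$); $D=\{x\in K:|x|\le1\}$. A normed space over $K$ is a $K$-vector space $E$ with $\|\cdot\|:E\to[0,\infty)$, $\|x\|=0\iff x=0$, $\|\alpha x\|=|\alpha|\|x\|$, $\|x+y\|\le\|x\|\vee\|y\|$; a Banach space if complete. $E^*$ is the space of continuous $K$-linear functionals $E\to K$. For a $K$-valued random variable $Y$, $\|Y\|_\infty$ is the essential supremum of $|Y|$. $K^2$ is normed by $|(x_1,x_2)|=|x_1|\vee|x_2|$; $v_1,v_2\in K^2$ are orthonormal if $|v_1|=|v_2|=1$ and $|\alpha_1v_1+\alpha_2v_2|=|\alpha_1|\vee|\alpha_2|$ for all $\alpha_i\in K$. An $E$-valued random variable $X$ is $K$-Gaussian if whenever $X_1,X_2$ are independent copies of $X$ and $(\alpha_{11},\alpha_{12}),(\alpha_{21},\alpha_{22})\in K^2$ are orthonormal, $(\alpha_{11}X_1+\alpha_{12}X_2,\alpha_{21}X_1+\alpha_{22}X_2)$ has the same law as $(X_1,X_2)$. *)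

theory Defs
  imports "HOL-Analysis.Analysis" "HOL-Probability.Probability"
begin

definition nonarch_absval :: "('k::{field,metric_space} \<Rightarrow> real) \<Rightarrow> bool" where
  "nonarch_absval av \<longleftrightarrow>
     (\<forall>x. av x \<ge> 0) \<and> (\<forall>x. av x = 0 \<longleftrightarrow> x = 0) \<and>
     (\<forall>x y. av (x * y) = av x * av y) \<and> (\<forall>x y. av (x + y) \<le> max (av x) (av y)) \<and>
     (\<forall>x y. dist x y = av (x - y))"

definition local_field :: "('k::{field,metric_space} \<Rightarrow> real) \<Rightarrow> bool" where
  "local_field av \<longleftrightarrow> nonarch_absval av \<and>
     locally_compact_space (euclidean :: 'k topology) \<and>
     \<not> open {0::'k} \<and>
     (\<forall>S::'k set. connected S \<longrightarrow> (\<exists>a. S \<subseteq> {a}))"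

definition separable_banach ::
  "('k::{field,metric_space} \<Rightarrow> real) \<Rightarrow> ('k \<Rightarrow> 'e::{ab_group_add,metric_space} \<Rightarrow> 'e)
    \<Rightarrow> ('e \<Rightarrow> real) \<Rightarrow> bool" where
  "separable_banach av sc nrm \<longleftrightarrow>
     vector_space sc \<and>
     (\<forall>x. nrm x \<ge> 0) \<and> (\<forall>x. nrm x = 0 \<longleftrightarrow> x = 0) \<and>
     (\<forall>a x. nrm (sc a x) = av a * nrm x) \<and>
     (\<forall>x y. nrm (x + y) \<le> max (nrm x) (nrm y)) \<and>
     (\<forall>x y. dist x y = nrm (x - y)) \<and>
     Topological_Spaces.complete (UNIV :: 'e set) \<and>
     separable_space (euclidean :: 'e topology)"

text \<open>D = closed unit ball of K; D-submodule.\<close>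
definition D_submodule ::
  "('k::{field,metric_space} \<Rightarrow> real) \<Rightarrow> ('k \<Rightarrow> 'e::ab_group_add \<Rightarrow> 'e) \<Rightarrow> 'e set \<Rightarrow> bool" where
  "D_submodule av sc G \<longleftrightarrow> 0 \<in> G \<and> (\<forall>x\<in>G. \<forall>y\<in>G. x + y \<in> G) \<and>
     (\<forall>a x. av a \<le> 1 \<longrightarrow> x \<in> G \<longrightarrow> sc a x \<in> G)"

definition dual_elem ::
  "('k::{field,metric_space} \<Rightarrow> 'e::{ab_group_add,metric_space} \<Rightarrow> 'e) \<Rightarrow> ('e \<Rightarrow> 'k) \<Rightarrow> bool" where
  "dual_elem sc T \<longleftrightarrow> Vector_Spaces.linear sc (*) T \<and> continuous_on UNIV T"

definition normalised_haar :: "'e::{ab_group_add,metric_space} set \<Rightarrow> 'e measure \<Rightarrow> bool" where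
  "normalised_haar G \<mu> \<longleftrightarrow> sets \<mu> = sets borel \<and> emeasure \<mu> G = 1 \<and> emeasure \<mu> UNIV = 1 \<and>
     (\<forall>g\<in>G. \<forall>A\<in>sets borel. A \<subseteq> G \<longrightarrow> emeasure \<mu> ((\<lambda>x. g + x) ` A) = emeasure \<mu> A)"

definition norm2 :: "('k \<Rightarrow> real) \<Rightarrow> 'k \<times> 'k \<Rightarrow> real" where
  "norm2 av v = max (av (fst v)) (av (snd v))"

definition orthonormal2 :: "('k::field \<Rightarrow> real) \<Rightarrow> 'k \<times> 'k \<Rightarrow> 'k \<times> 'k \<Rightarrow> bool" where
  "orthonormal2 av v1 v2 \<longleftrightarrow> norm2 av v1 = 1 \<and> norm2 av v2 = 1 \<and>
     (\<forall>b1 b2. norm2 av (b1 * fst v1 + b2 * fst v2, b1 * snd v1 + b2 * snd v2) = max (av b1) (av b2))"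

text \<open>K-Gaussian: for independent copies X1, X2 of X (joint law = L \<otimes> L, L the law of X)
  and orthonormal (a11,a12),(a21,a22), the pair (a11 X1 + a12 X2, a21 X1 + a22 X2) has law L \<otimes> L.\<close>
definition K_gaussian ::
  "('k::{field,metric_space} \<Rightarrow> real) \<Rightarrow> ('k \<Rightarrow> 'e::{ab_group_add,metric_space} \<Rightarrow> 'e)
    \<Rightarrow> 'w measure \<Rightarrow> ('w \<Rightarrow> 'e) \<Rightarrow> bool" where
  "K_gaussian av sc M X \<longleftrightarrow>
     (let L = distr M borel X in
      \<forall>a11 a12 a21 a22. orthonormal2 av (a11, a12) (a21, a22) \<longrightarrow>
        distr (L \<Otimes>\<^sub>M L) (borel \<Otimes>\<^sub>M borel)
          (\<lambda>(x, y). (sc a11 x + sc a12 y, sc a21 x + sc a22 y)) = L \<Otimes>\<^sub>M L)"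

end

theory Submission
  imports Defs
begin

text \<open>An orthonormal matrix
  over \<open>K\<close> has entries in \<open>D\<close> and a determinant of absolute value \<open>1\<close>, so it acts additively and
  bijectively on \<open>G \<times> G\<close>; the image of \<open>\<mu> \<Otimes> \<mu>\<close> is therefore again a translation-invariant
  probability measure on \<open>G \<times> G\<close> and equals \<open>\<mu> \<Otimes> \<mu>\<close> by uniqueness of Haar measure.

  For the description of \<open>G\<close>: Haar measure charges every ball centred in \<open>G\<close>, and by the
  ultrametric inequality \<open>\<bar>T\<bar>\<close> is locally constant away from the kernel, so \<open>\<bar>T x\<bar> \<le> \<parallel>T(X)\<parallel>\<^sub>\<infinity>\<close>
  for \<open>x \<in> G\<close>. Conversely a point \<open>x \<notin> G\<close> is separated from \<open>G\<close> by a continuous functional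
  with \<open>\<bar>T\<bar> \<le> 1\<close> on \<open>G\<close> and \<open>\<bar>T x\<bar> > 1\<close>: since \<open>K\<close> is spherically complete, the Hahn--Banach
  theorem holds for functionals dominated by the gauge of a thickening of \<open>G\<close>, and the discreteness
  of the value group pushes \<open>\<bar>T x\<bar>\<close> strictly above \<open>1\<close>.\<close>

section \<open>Non-archimedean absolute values\<close>

locale valued_field =
  fixes av :: "'k::{field,metric_space} \<Rightarrow> real"
  assumes nonarch_absval: "nonarch_absval av"
begin

lemma abs_nonneg: "0 \<le> av x"
  and abs_eq_0_iff [simp]: "av x = 0 \<longleftrightarrow> x = 0"
  and abs_mult [simp]: "av (x * y) = av x * av y"
  and abs_add_le: "av (x + y) \<le> max (av x) (av y)"
  and dist_eq_abs: "dist x y = av (x - y)"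
  using nonarch_absval unfolding nonarch_absval_def by auto

lemma abs_pos: "x \<noteq> 0 \<Longrightarrow> 0 < av x"
  using abs_nonneg[of x] by (simp add: order_le_less)

lemma abs_0 [simp]: "av 0 = 0"
  by simp

lemma abs_1 [simp]: "av 1 = 1"
  using abs_mult[of 1 1] by (metis abs_eq_0_iff mult_cancel_right1 one_neq_zero)

lemma abs_minus [simp]: "av (- x) = av x"
proof -
  have "av (- 1) * av (- 1) = 1"
    by (metis abs_1 abs_mult mult_minus1_right minus_minus)
  then have "av (- 1) = 1"
    using abs_nonneg[of "- 1"] by (metis abs_of_nonneg real_sqrt_abs2 real_sqrt_one)
  then show ?thesis
    using abs_mult[of "- 1" x] by simp
qed

lemma abs_minus_commute: "av (x - y) = av (y - x)"
  by (metis abs_minus minus_diff_eq)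

lemma abs_inverse [simp]: "av (inverse x) = inverse (av x)"
proof (cases "x = 0")
  case False
  then have "av x * av (inverse x) = 1"
    by (simp flip: abs_mult)
  then show ?thesis
    by (simp add: inverse_unique)
qed simp

lemma abs_divide [simp]: "av (x / y) = av x / av y"
  by (simp add: divide_inverse)

lemma abs_power [simp]: "av (x ^ n) = av x ^ n"
  by (induction n) simp_all

lemma abs_add_eq_dominant: "av y < av x \<Longrightarrow> av (x + y) = av x"
  using abs_add_le[of x y] abs_add_le[of "x + y" "- y"] by (auto simp: max_def split: if_splits)

lemma abs_eq_dist_0: "av x = dist x 0"
  by (simp add: dist_eq_abs)

lemma continuous_on_abs: "continuous_on S av"
  unfolding abs_eq_dist_0[abs_def] by (intro continuous_intros)

lemma cball_eq: "cball (c::'k) r = {y. av (c - y) \<le> r}"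
  by (auto simp: dist_eq_abs)

lemma continuous_on_affine: "continuous_on S (\<lambda>y. c + a * (y::'k))"
proof (rule lipschitz_on_continuous_on)
  show "(av a)-lipschitz_on S (\<lambda>y. c + a * y)"
    by (rule lipschitz_onI) (auto simp: dist_eq_abs abs_nonneg right_diff_distrib[symmetric])
qed

lemma closed_ball: "closed (ball (c::'k) r)"
proof (cases "r > 0")
  case True
  have "ball y r \<subseteq> - ball c r" if "y \<notin> ball c r" for y
  proof
    fix z assume "z \<in> ball y r"
    then have "av (y - z) < av (c - y)"
      using that by (simp add: dist_eq_abs)
    then have "av (c - z) = av (c - y)"
      using abs_add_eq_dominant[of "y - z" "c - y"] by simp
    then show "z \<in> - ball c r"
      using that by (simp add: dist_eq_abs)
  qed
  then show ?thesis
    unfolding closed_def open_contains_ball using True by blast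
qed (simp add: not_less ball_empty)

lemma orthonormal2_abs_le_1:
  assumes "orthonormal2 av (a11, a12) (a21, a22)"
  shows "av a11 \<le> 1" "av a12 \<le> 1" "av a21 \<le> 1" "av a22 \<le> 1"
  using assms unfolding orthonormal2_def norm2_def by auto

text \<open>Testing orthonormality against the columns of the adjugate gives
  \<open>\<bar>det\<bar> = max \<bar>a\<^sub>2\<^sub>2\<bar> \<bar>a\<^sub>1\<^sub>2\<bar> = max \<bar>a\<^sub>2\<^sub>1\<bar> \<bar>a\<^sub>1\<^sub>1\<bar>\<close>.\<close>
lemma orthonormal2_abs_det:
  assumes "orthonormal2 av (a11, a12) (a21, a22)"
  shows "1 \<le> av (a11 * a22 - a12 * a21)"
proof -
  have row: "max (av a11) (av a12) = 1"
    and test: "\<And>b1 b2. max (av (b1 * a11 + b2 * a21)) (av (b1 * a12 + b2 * a22)) = max (av b1) (av b2)"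
    using assms unfolding orthonormal2_def norm2_def by auto
  have "max (av (a11 * a22 - a12 * a21)) 0 = max (av a22) (av a12)"
    using test[of a22 "- a12"] by (simp add: algebra_simps)
  moreover have "max 0 (av (a11 * a22 - a12 * a21)) = max (av a21) (av a11)"
    using test[of "- a21" a11] by (simp add: algebra_simps)
  ultimately show ?thesis
    using row abs_nonneg[of "a11 * a22 - a12 * a21"] by (simp add: max_def split: if_splits)
qed

end

section \<open>Local fields\<close>

locale local_valued_field =
  fixes av :: "'k::{field,metric_space} \<Rightarrow> real"
  assumes local_field: "local_field av"
begin

sublocale valued_field
  using local_field by unfold_locales (simp add: local_field_def)

lemma exists_abs_between_0_1: "\<exists>b. 0 < av b \<and> av b < 1"
proof -
  have "\<not> open {0::'k}"
    using local_field unfolding local_field_def by blast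
  then obtain b :: 'k where "b \<noteq> 0" "dist b 0 < 1"
    unfolding open_dist by (metis singleton_iff zero_less_one)
  then show ?thesis
    using abs_pos by (auto simp: abs_eq_dist_0)
qed

lemma exists_abs_less: "0 < e \<Longrightarrow> \<exists>a. 0 < av a \<and> av a < e"
proof -
  assume "0 < e"
  obtain b where b: "0 < av b" "av b < 1"
    using exists_abs_between_0_1 by blast
  obtain n where "av b ^ n < e"
    using real_arch_pow_inv[OF \<open>0 < e\<close> b(2)] by blast
  then show ?thesis
    using b by (intro exI[of _ "b ^ n"]) simp
qed

lemma exists_abs_ge: "\<exists>a. R \<le> av a"
proof -
  have "0 < 1 / max R 1"
    by (simp add: max.strict_coboundedI2)
  then obtain b where b: "0 < av b" "av b < 1 / max R 1"
    using exists_abs_less by blast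
  then have "av b * max R 1 < 1"
    by (simp add: less_divide_eq max.strict_coboundedI2)
  then have "max R 1 \<le> inverse (av b)"
    by (metis inverse_eq_divide pos_le_divide_eq b(1) less_imp_le mult.commute)
  then show ?thesis
    by (intro exI[of _ "inverse b"]) simp
qed

lemma compact_cball: "compact (cball (c::'k) r)"
proof -
  have "\<exists>U L. open U \<and> compact L \<and> (0::'k) \<in> U \<and> U \<subseteq> L"
    using local_field unfolding local_field_def locally_compact_space_def by auto
  then obtain U L where UL: "open U" "compact L" "(0::'k) \<in> U" "U \<subseteq> L"
    by blast
  then obtain e where e: "0 < e" "ball 0 (2 * e) \<subseteq> L"
    by (metis open_contains_ball_eq order_trans field_sum_of_halves mult_2 half_gt_zero)
  then have "cball 0 e \<subseteq> L"
    by (force simp: subset_iff)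
  then have e_compact: "compact (cball (0::'k) e)"
    using compact_Int_closed[OF UL(2) closed_cball, of 0 e] by (simp add: Int_absorb1)
  obtain a where a: "max (r / e) 1 \<le> av a"
    using exists_abs_ge by blast
  then have a0: "a \<noteq> 0" and ae: "r \<le> av a * e"
    using e(1) by (auto simp: pos_divide_le_eq)
  have "cball c r \<subseteq> (\<lambda>w. c + a * w) ` cball 0 e"
  proof
    fix y assume "y \<in> cball c r"
    then have "av ((y - c) / a) \<le> e"
      using ae a0 abs_pos[OF a0] by (simp add: cball_eq abs_minus_commute divide_le_eq mult.commute)
    moreover have "y = c + a * ((y - c) / a)"
      using a0 by simp
    ultimately show "y \<in> (\<lambda>w. c + a * w) ` cball 0 e"
      by (intro image_eqI[of _ _ "(y - c) / a"]) (simp_all add: cball_eq)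
  qed
  moreover have "compact ((\<lambda>w. c + a * w) ` cball 0 e)"
    by (rule compact_continuous_image[OF continuous_on_affine e_compact])
  ultimately show ?thesis
    by (metis closed_cball compact_Int_closed inf.absorb_iff2)
qed

lemma abs_less_1_iff_ball: "av a < 1 \<longleftrightarrow> a \<in> ball 0 1"
  by (simp add: dist_eq_abs)

lemma exists_uniformizer: "\<exists>p. 0 < av p \<and> av p < 1 \<and> (\<forall>a. av a < 1 \<longrightarrow> av a \<le> av p)"
proof -
  have "compact (ball (0::'k) 1)"
    using compact_Int_closed[OF compact_cball closed_ball, of 0 1 0 1] ball_subset_cball
    by (simp add: Int_absorb1)
  then have "compact (av ` ball 0 1)"
    by (rule compact_continuous_image[OF continuous_on_abs])
  then obtain p where p: "p \<in> ball 0 1" "\<forall>a\<in>ball 0 1. av a \<le> av p"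
    using compact_attains_sup[of "av ` ball 0 1"] by auto
  obtain b where "0 < av b" "av b < 1"
    using exists_abs_between_0_1 by blast
  then show ?thesis
    using p by (intro exI[of _ p]) (force simp: abs_less_1_iff_ball)
qed

lemma abs_gt_1_ge_inverse_uniformizer:
  assumes p: "0 < av p" "\<And>a. av a < 1 \<Longrightarrow> av a \<le> av p" and "1 < av b"
  shows "1 / av p \<le> av b"
proof (rule ccontr)
  assume "\<not> 1 / av p \<le> av b"
  then have "av (p * b) < 1"
    using p(1) by (simp add: field_simps)
  then have "av p * av b \<le> av p"
    using p(2) by fastforce
  then show False
    using mult_strict_left_mono[OF \<open>1 < av b\<close> p(1)] by linarith
qed

text \<open>The centre of the smallest of finitely many pairwise intersecting balls lies in all of them;
  compactness of closed balls does the rest.\<close>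
lemma spherically_complete:
  assumes "I \<noteq> {}"
    and pairwise: "\<And>i j. i \<in> I \<Longrightarrow> j \<in> I \<Longrightarrow> av (c i - c j) \<le> max (r i) (r j)"
  shows "\<exists>y. \<forall>i\<in>I. av (y - c i) \<le> r i"
proof -
  obtain i0 where i0: "i0 \<in> I"
    using assms(1) by blast
  let ?B = "\<lambda>i. cball (c i) (r i)"
  have "?B i0 \<inter> \<Inter>(?B ` I) \<noteq> {}"
  proof (rule compact_imp_fip)
    fix F assume F: "finite F" "F \<subseteq> ?B ` I"
    then obtain J where J: "J \<subseteq> I" "finite J" "F = ?B ` J"
      by (meson finite_subset_image)
    let ?J = "insert i0 J"
    define m where "m = arg_min_on r ?J"
    have m: "m \<in> ?J" "\<And>j. j \<in> ?J \<Longrightarrow> r m \<le> r j"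
      using arg_min_if_finite[of ?J r] J(2) unfolding m_def by (auto simp: not_less)
    have "c m \<in> ?B j" if "j \<in> ?J" for j
      using pairwise[of j m] m that J(1) i0 by (force simp: cball_eq max_def split: if_splits)
    then show "?B i0 \<inter> \<Inter>F \<noteq> {}"
      using J(3) by blast
  qed (auto intro: compact_cball)
  then show ?thesis
    by (auto simp: cball_eq abs_minus_commute)
qed

end

section \<open>\<open>D\<close>-submodules\<close>

locale nonarch_vector_space = local_valued_field av + V: vector_space sc
  for av :: "'k::{field,metric_space} \<Rightarrow> real" and sc :: "'k \<Rightarrow> 'e::ab_group_add \<Rightarrow> 'e"
begin

lemma D_submoduleD:
  assumes "D_submodule av sc U"
  shows "0 \<in> U" "u \<in> U \<Longrightarrow> v \<in> U \<Longrightarrow> u + v \<in> U" "av a \<le> 1 \<Longrightarrow> u \<in> U \<Longrightarrow> sc a u \<in> U"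
  using assms unfolding D_submodule_def by auto

lemma D_submodule_uminus:
  assumes "D_submodule av sc G" "x \<in> G"
  shows "- x \<in> G"
  using D_submoduleD(3)[OF assms(1), of "- 1" x] assms(2) by (simp add: V.scale_minus_left)

lemma D_submodule_scale_diff:
  assumes U: "D_submodule av sc U" and u: "u \<in> U" "u' \<in> U" and ab: "av a \<le> av b"
  shows "sc a u - sc b u' \<in> sc b ` U"
proof (cases "b = 0")
  case True
  then have "a = 0"
    using ab abs_nonneg[of a] by simp
  then show ?thesis
    using True D_submoduleD(1)[OF U] by (auto intro!: image_eqI[of _ _ 0])
next
  case False
  then have "av (a / b) \<le> 1"
    using ab abs_pos[of b] by (simp add: divide_le_eq_1)
  then have "sc (a / b) u + sc (- 1) u' \<in> U"
    using u by (intro D_submoduleD[OF U]) simp_all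
  moreover have "sc b (sc (a / b) u + sc (- 1) u') = sc a u - sc b u'"
    using False by (simp add: V.scale_right_diff_distrib)
  ultimately show ?thesis
    by (metis image_eqI)
qed

lemma orthonormal2_image_D_submodule:
  assumes G: "D_submodule av sc G" and o: "orthonormal2 av (a11, a12) (a21, a22)"
  shows "(\<lambda>(x, y). (sc a11 x + sc a12 y, sc a21 x + sc a22 y)) ` (G \<times> G) = G \<times> G"
proof
  note a = orthonormal2_abs_le_1[OF o]
  note GD = D_submoduleD[OF G]
  show "(\<lambda>(x, y). (sc a11 x + sc a12 y, sc a21 x + sc a22 y)) ` (G \<times> G) \<subseteq> G \<times> G"
    using a GD by auto
  define d where "d = a11 * a22 - a12 * a21"
  have "1 \<le> av d"
    unfolding d_def by (rule orthonormal2_abs_det[OF o])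
  then have "d \<noteq> 0" and scaled: "\<And>c. av c \<le> 1 \<Longrightarrow> av (c / d) \<le> 1"
    by (auto simp: divide_le_eq_1)
  show "G \<times> G \<subseteq> (\<lambda>(x, y). (sc a11 x + sc a12 y, sc a21 x + sc a22 y)) ` (G \<times> G)"
  proof clarify
    fix g1 g2 assume g: "g1 \<in> G" "g2 \<in> G"
    define h1 where "h1 = sc (a22 / d) g1 + sc (- a12 / d) g2"
    define h2 where "h2 = sc (- a21 / d) g1 + sc (a11 / d) g2"
    have "h1 \<in> G" "h2 \<in> G"
      unfolding h1_def h2_def using a g by (intro GD(2) GD(3) scaled; simp)+
    moreover have "sc a11 h1 + sc a12 h2
        = sc ((a11 * a22 - a12 * a21) / d) g1 + sc ((a12 * a11 - a11 * a12) / d) g2"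
      and "sc a21 h1 + sc a22 h2
        = sc ((a21 * a22 - a22 * a21) / d) g1 + sc ((a11 * a22 - a12 * a21) / d) g2"
      unfolding h1_def h2_def
      by (simp_all add: V.scale_right_distrib V.scale_left_distrib diff_divide_distrib
          V.scale_left_diff_distrib algebra_simps)
    then have "sc a11 h1 + sc a12 h2 = g1" "sc a21 h1 + sc a22 h2 = g2"
      using \<open>d \<noteq> 0\<close> by (simp_all add: d_def)
    ultimately show "(g1, g2) \<in> (\<lambda>(x, y). (sc a11 x + sc a12 y, sc a21 x + sc a22 y)) ` (G \<times> G)"
      by (intro image_eqI[of _ _ "(h1, h2)"]) auto
  qed
qed

end

section \<open>A non-archimedean Hahn--Banach theorem\<close>

context nonarch_vector_space
begin

text \<open>Graphs of \<open>K\<close>-linear functionals on subspaces of \<open>E\<close> whose absolute value is bounded by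
  the gauge of \<open>U\<close>; the bound for \<open>a = 0\<close> makes such a relation single-valued.\<close>
definition dominated_graph :: "'e set \<Rightarrow> ('e \<times> 'k) set \<Rightarrow> bool" where
  "dominated_graph U \<Gamma> \<longleftrightarrow> (0, 0) \<in> \<Gamma> \<and>
     (\<forall>v k w l. (v, k) \<in> \<Gamma> \<longrightarrow> (w, l) \<in> \<Gamma> \<longrightarrow> (v + w, k + l) \<in> \<Gamma>) \<and>
     (\<forall>c v k. (v, k) \<in> \<Gamma> \<longrightarrow> (sc c v, c * k) \<in> \<Gamma>) \<and>
     (\<forall>v k a. (v, k) \<in> \<Gamma> \<longrightarrow> v \<in> sc a ` U \<longrightarrow> av k \<le> av a)"

lemma dominated_graphD:
  assumes "dominated_graph U \<Gamma>"
  shows "(0, 0) \<in> \<Gamma>" "(v, k) \<in> \<Gamma> \<Longrightarrow> (w, l) \<in> \<Gamma> \<Longrightarrow> (v + w, k + l) \<in> \<Gamma>"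
    "(v, k) \<in> \<Gamma> \<Longrightarrow> (sc c v, c * k) \<in> \<Gamma>" "(v, k) \<in> \<Gamma> \<Longrightarrow> v \<in> sc a ` U \<Longrightarrow> av k \<le> av a"
  using assms unfolding dominated_graph_def by blast+

lemma dominated_graph_unique:
  assumes U: "D_submodule av sc U" and \<Gamma>: "dominated_graph U \<Gamma>"
    and "(v, k) \<in> \<Gamma>" "(v, l) \<in> \<Gamma>"
  shows "k = l"
proof -
  have "(v + sc (- 1) v, k + (- 1) * l) \<in> \<Gamma>"
    using \<Gamma> assms(3,4) unfolding dominated_graph_def by blast
  moreover have "0 \<in> sc 0 ` U"
    using D_submoduleD(1)[OF U] by force
  ultimately have "av (k - l) \<le> 0"
    using \<Gamma> unfolding dominated_graph_def by fastforce
  then show ?thesis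
    using abs_nonneg[of "k - l"] by simp
qed

lemma dominated_graph_chain_Union:
  assumes "C \<noteq> {}" "\<And>\<Gamma>. \<Gamma> \<in> C \<Longrightarrow> dominated_graph U \<Gamma>" "chain\<^sub>\<subseteq> C"
  shows "dominated_graph U (\<Union>C)"
  unfolding dominated_graph_def
proof (intro conjI allI impI)
  show "(0, 0) \<in> \<Union>C"
    using assms(1,2) unfolding dominated_graph_def by blast
  fix v k w l assume "(v, k) \<in> \<Union>C" "(w, l) \<in> \<Union>C"
  then obtain \<Gamma> where "\<Gamma> \<in> C" "(v, k) \<in> \<Gamma>" "(w, l) \<in> \<Gamma>"
    using assms(3) unfolding chain_subset_def by blast
  then show "(v + w, k + l) \<in> \<Union>C"
    using assms(2) unfolding dominated_graph_def by blast
qed (use assms(2) in \<open>unfold dominated_graph_def, blast\<close>)+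

lemma dominated_graph_gauge_diff:
  assumes U: "D_submodule av sc U" and \<Gamma>: "dominated_graph U \<Gamma>"
    and graph: "(v, k) \<in> \<Gamma>" "(w, l) \<in> \<Gamma>"
    and gauge: "v + z \<in> sc a ` U" "w + z \<in> sc b ` U" "av a \<le> av b"
  shows "av (k - l) \<le> av b"
proof -
  obtain u u' where u: "u \<in> U" "u' \<in> U" "v + z = sc a u" "w + z = sc b u'"
    using gauge(1,2) by blast
  then have "v + sc (- 1) w = sc a u - sc b u'"
    by (simp add: V.scale_minus_left flip: u(3,4))
  then have "v + sc (- 1) w \<in> sc b ` U"
    using D_submodule_scale_diff[OF U u(1,2) gauge(3)] by simp
  moreover have "(v + sc (- 1) w, k + (- 1) * l) \<in> \<Gamma>"
    using dominated_graphD(2,3)[OF \<Gamma>] graph by blast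
  ultimately show ?thesis
    using dominated_graphD(4)[OF \<Gamma>] by fastforce
qed

text \<open>The admissible values \<open>c\<close> for the functional at \<open>z\<close> form an intersection of balls
  \<open>cball (- k) \<bar>a\<bar>\<close>; these pairwise intersect, so spherical completeness applies.\<close>
lemma dominated_extension_value:
  assumes U: "D_submodule av sc U" and \<Gamma>: "dominated_graph U \<Gamma>"
  shows "\<exists>c. \<forall>v k a. (v, k) \<in> \<Gamma> \<longrightarrow> v + z \<in> sc a ` U \<longrightarrow> av (c + k) \<le> av a"
proof -
  define I where "I = {(k, a). \<exists>v. (v, k) \<in> \<Gamma> \<and> v + z \<in> sc a ` U}"
  have pairwise: "av (- fst i - - fst j) \<le> max (av (snd i)) (av (snd j))"
    if members: "i \<in> I" "j \<in> I" for i j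
  proof -
    obtain k a l b where ij: "i = (k, a)" "j = (l, b)"
      by fastforce
    then obtain v w where "(v, k) \<in> \<Gamma>" "(w, l) \<in> \<Gamma>" "v + z \<in> sc a ` U" "w + z \<in> sc b ` U"
      using members unfolding I_def by blast
    then have "av (k - l) \<le> max (av a) (av b)"
      using dominated_graph_gauge_diff[OF U \<Gamma>, of v k w l z a b]
        dominated_graph_gauge_diff[OF U \<Gamma>, of w l v k z b a]
      by (cases "av a \<le> av b") (auto simp: abs_minus_commute)
    then show ?thesis
      using ij by (simp add: abs_minus_commute)
  qed
  show ?thesis
  proof (cases "I = {}")
    case True
    then show ?thesis
      unfolding I_def by blast
  next
    case False
    from spherically_complete[where c = "\<lambda>i. - fst i" and r = "\<lambda>i. av (snd i)", OF False pairwise]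
    obtain c where "\<forall>i\<in>I. av (c - - fst i) \<le> av (snd i)"
      by blast
    then show ?thesis
      unfolding I_def by fastforce
  qed
qed

lemma dominated_adjoin_bound:
  assumes \<Gamma>: "dominated_graph U \<Gamma>"
    and c: "\<And>v k a. (v, k) \<in> \<Gamma> \<Longrightarrow> v + z \<in> sc a ` U \<Longrightarrow> av (c + k) \<le> av a"
    and "(v, k) \<in> \<Gamma>" and va: "v + sc t z \<in> sc a ` U"
  shows "av (k + t * c) \<le> av a"
proof (cases "t = 0")
  case True
  then show ?thesis
    using dominated_graphD(4)[OF \<Gamma> \<open>(v, k) \<in> \<Gamma>\<close>] va by simp
next
  case False
  obtain u where u: "u \<in> U" "v + sc t z = sc a u"
    using va by blast
  have "sc (a / t) u = sc (1 / t) (v + sc t z)"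
    using u(2) by simp
  also have "\<dots> = sc (1 / t) v + z"
    using False by (simp add: V.scale_right_distrib)
  finally have "sc (1 / t) v + z \<in> sc (a / t) ` U"
    using u(1) by (metis image_eqI)
  then have "av (c + (1 / t) * k) \<le> av (a / t)"
    using c[OF dominated_graphD(3)[OF \<Gamma> \<open>(v, k) \<in> \<Gamma>\<close>]] by blast
  then have "av t * av (c + (1 / t) * k) \<le> av a"
    using False abs_pos[of t] by (simp add: field_simps)
  moreover have "t * (c + (1 / t) * k) = k + t * c"
    using False by (simp add: algebra_simps)
  ultimately show ?thesis
    by (metis abs_mult)
qed

lemma dominated_graph_adjoin:
  assumes \<Gamma>: "dominated_graph U \<Gamma>"
    and c: "\<And>v k a. (v, k) \<in> \<Gamma> \<Longrightarrow> v + z \<in> sc a ` U \<Longrightarrow> av (c + k) \<le> av a"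
  shows "dominated_graph U {(v + sc t z, k + t * c) | v k t. (v, k) \<in> \<Gamma>}"
    (is "dominated_graph U ?\<Gamma>'")
  unfolding dominated_graph_def
proof (intro conjI allI impI)
  have "(0, 0) = (0 + sc 0 z, 0 + 0 * c)"
    by simp
  then show "(0, 0) \<in> ?\<Gamma>'"
    using dominated_graphD(1)[OF \<Gamma>] by blast
  fix v k w l assume "(v, k) \<in> ?\<Gamma>'" "(w, l) \<in> ?\<Gamma>'"
  then obtain v1 k1 t1 v2 k2 t2 where vk: "(v1, k1) \<in> \<Gamma>" "(v2, k2) \<in> \<Gamma>"
    "v = v1 + sc t1 z" "k = k1 + t1 * c" "w = v2 + sc t2 z" "l = k2 + t2 * c"
    by blast
  then have "v + w = (v1 + v2) + sc (t1 + t2) z" "k + l = (k1 + k2) + (t1 + t2) * c"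
    by (simp_all add: algebra_simps V.scale_left_distrib)
  then show "(v + w, k + l) \<in> ?\<Gamma>'"
    using dominated_graphD(2)[OF \<Gamma> vk(1,2)] by blast
next
  fix d v k assume "(v, k) \<in> ?\<Gamma>'"
  then obtain v1 k1 t where vk: "(v1, k1) \<in> \<Gamma>" "v = v1 + sc t z" "k = k1 + t * c"
    by blast
  then have "sc d v = sc d v1 + sc (d * t) z" "d * k = d * k1 + (d * t) * c"
    by (simp_all add: algebra_simps V.scale_right_distrib)
  then show "(sc d v, d * k) \<in> ?\<Gamma>'"
    using dominated_graphD(3)[OF \<Gamma> vk(1)] by blast
next
  fix v k a assume "(v, k) \<in> ?\<Gamma>'" and va: "v \<in> sc a ` U"
  then obtain v1 k1 t where vk: "(v1, k1) \<in> \<Gamma>" "v = v1 + sc t z" "k = k1 + t * c"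
    by blast
  have "av (k1 + t * c) \<le> av a"
    by (rule dominated_adjoin_bound[where z = z and c = c])
      (fact \<Gamma>, fact c, fact vk(1), use va vk(2) in simp)
  then show "av k \<le> av a"
    using vk(3) by simp
qed

lemma exists_maximal_dominated_graph:
  assumes \<Gamma>: "dominated_graph U \<Gamma>"
  obtains M where "dominated_graph U M" "\<Gamma> \<subseteq> M"
    "\<And>\<Gamma>'. dominated_graph U \<Gamma>' \<Longrightarrow> M \<subseteq> \<Gamma>' \<Longrightarrow> \<Gamma>' = M"
proof -
  let ?A = "{\<Gamma>'. dominated_graph U \<Gamma>' \<and> \<Gamma> \<subseteq> \<Gamma>'}"
  have "\<exists>M\<in>?A. \<forall>\<Gamma>'\<in>?A. M \<subseteq> \<Gamma>' \<longrightarrow> \<Gamma>' = M"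
  proof (rule Zorn_Lemma2, intro ballI)
    fix C assume C: "C \<in> chains ?A"
    show "\<exists>M\<in>?A. \<forall>\<Gamma>'\<in>C. \<Gamma>' \<subseteq> M"
    proof (cases "C = {}")
      case False
      then have "\<Union>C \<in> ?A"
        using C dominated_graph_chain_Union[OF False] unfolding chains_def by blast
      then show ?thesis
        by blast
    qed (use \<Gamma> in blast)
  qed
  then obtain M where "M \<in> ?A" and "\<forall>\<Gamma>'\<in>?A. M \<subseteq> \<Gamma>' \<longrightarrow> \<Gamma>' = M"
    by (rule bexE)
  then show ?thesis
    using that by auto
qed

lemma maximal_dominated_graph_total:
  assumes U: "D_submodule av sc U" and M: "dominated_graph U M"
    and maximal: "\<And>\<Gamma>'. dominated_graph U \<Gamma>' \<Longrightarrow> M \<subseteq> \<Gamma>' \<Longrightarrow> \<Gamma>' = M"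
  shows "\<exists>k. (z, k) \<in> M"
proof -
  obtain c where c: "\<And>v k a. (v, k) \<in> M \<Longrightarrow> v + z \<in> sc a ` U \<Longrightarrow> av (c + k) \<le> av a"
    using dominated_extension_value[OF U M] by blast
  let ?M' = "{(v + sc t z, k + t * c) | v k t. (v, k) \<in> M}"
  have M_sub: "M \<subseteq> ?M'"
  proof
    fix p assume "p \<in> M"
    moreover obtain v k where "p = (v, k)"
      by fastforce
    moreover have "(v, k) = (v + sc 0 z, k + 0 * c)"
      by simp
    ultimately show "p \<in> ?M'"
      by blast
  qed
  have "?M' = M"
    by (rule maximal[OF dominated_graph_adjoin[where z = z and c = c, OF M c] M_sub])
  moreover have "(z, c) = (0 + sc 1 z, 0 + 1 * c)"
    by simp
  then have "(z, c) \<in> ?M'"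
    using dominated_graphD(1)[OF M] by blast
  ultimately show ?thesis
    by blast
qed

theorem nonarch_hahn_banach:
  assumes U: "D_submodule av sc U" and \<Gamma>: "dominated_graph U \<Gamma>"
  obtains T where "Vector_Spaces.linear sc (*) T"
    "\<And>x a. x \<in> sc a ` U \<Longrightarrow> av (T x) \<le> av a" "\<And>v k. (v, k) \<in> \<Gamma> \<Longrightarrow> T v = k"
proof -
  obtain M where M: "dominated_graph U M" "\<Gamma> \<subseteq> M"
    and maximal: "\<And>\<Gamma>'. dominated_graph U \<Gamma>' \<Longrightarrow> M \<subseteq> \<Gamma>' \<Longrightarrow> \<Gamma>' = M"
    using exists_maximal_dominated_graph[OF \<Gamma>] by blast
  note MD = dominated_graphD[OF M(1)]
  define T where "T y = (SOME k. (y, k) \<in> M)" for y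
  have TM: "(y, T y) \<in> M" for y
    unfolding T_def using maximal_dominated_graph_total[OF U M(1) maximal] by (rule someI_ex)
  have T_eq: "(y, k) \<in> M \<Longrightarrow> T y = k" for y k
    using dominated_graph_unique[OF U M(1) TM] by blast
  show ?thesis
  proof
    show "Vector_Spaces.linear sc (*) T"
      unfolding Vector_Spaces.linear_iff
      by (intro conjI allI V.vector_space_axioms vector_space_over_itself.vector_space_axioms
          T_eq MD(2)[OF TM TM] MD(3)[OF TM])
    show "av (T x) \<le> av a" if "x \<in> sc a ` U" for x a
      using MD(4)[OF TM that] .
    show "T v = k" if "(v, k) \<in> \<Gamma>" for v k
      using T_eq M(2) that by blast
  qed
qed

end

section \<open>Separating points from closed \<open>D\<close>-submodules\<close>

locale nonarch_banach = local_valued_field av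
  for av :: "'k::{field,metric_space} \<Rightarrow> real" +
  fixes sc :: "'k \<Rightarrow> 'e::{ab_group_add,metric_space} \<Rightarrow> 'e" and nrm :: "'e \<Rightarrow> real"
  assumes separable_banach: "separable_banach av sc nrm"
begin

sublocale nonarch_vector_space av sc
  by (intro nonarch_vector_space.intro local_valued_field_axioms)
    (use separable_banach in \<open>simp add: separable_banach_def\<close>)

lemma nrm_nonneg: "0 \<le> nrm x"
  and nrm_eq_0_iff [simp]: "nrm x = 0 \<longleftrightarrow> x = 0"
  and nrm_scale [simp]: "nrm (sc a x) = av a * nrm x"
  and nrm_add_le: "nrm (x + y) \<le> max (nrm x) (nrm y)"
  and dist_eq_nrm: "dist x y = nrm (x - y)"
  and separable: "separable_space (euclidean :: 'e topology)"
  using separable_banach unfolding separable_banach_def by auto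

lemma nrm_0 [simp]: "nrm 0 = 0"
  by simp

lemma nrm_minus [simp]: "nrm (- x) = nrm x"
  using nrm_scale[of "- 1" x] by (simp add: V.scale_minus_left)

lemma dist_add_left: "dist (g + x) (g + y) = dist x (y::'e)"
  by (simp add: dist_eq_nrm)

lemma continuous_on_add_left: "continuous_on S (\<lambda>x::'e. g + x)"
  by (rule lipschitz_on_continuous_on[of 1]) (simp add: lipschitz_on_def dist_add_left)

lemma continuous_on_lincomb: "continuous_on S (\<lambda>p. sc a (fst p) + sc b (snd p))"
proof (rule lipschitz_on_continuous_on, rule lipschitz_onI)
  fix p q :: "'e \<times> 'e"
  have "dist (sc a (fst p) + sc b (snd p)) (sc a (fst q) + sc b (snd q))
      = nrm (sc a (fst p - fst q) + sc b (snd p - snd q))"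
    by (simp add: dist_eq_nrm V.scale_right_diff_distrib algebra_simps)
  also have "\<dots> \<le> max (av a * dist (fst p) (fst q)) (av b * dist (snd p) (snd q))"
    using nrm_add_le[of "sc a (fst p - fst q)" "sc b (snd p - snd q)"] by (simp add: dist_eq_nrm)
  also have "\<dots> \<le> max (av a) (av b) * dist p q"
    using dist_fst_le[of p q] dist_snd_le[of p q] abs_nonneg[of a] abs_nonneg[of b]
    by (auto intro: mult_mono simp: max_def)
  finally show "dist (sc a (fst p) + sc b (snd p)) (sc a (fst q) + sc b (snd q))
      \<le> max (av a) (av b) * dist p q" .
qed (simp add: abs_nonneg le_max_iff_disj)

lemma D_submodule_thicken:
  assumes G: "D_submodule av sc G" and "0 \<le> \<rho>"
  shows "D_submodule av sc {g + b | g b. g \<in> G \<and> nrm b \<le> \<rho>}"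
  unfolding D_submodule_def
proof (intro conjI ballI allI impI)
  show "0 \<in> {g + b | g b. g \<in> G \<and> nrm b \<le> \<rho>}"
    using D_submoduleD(1)[OF G] \<open>0 \<le> \<rho>\<close> by (intro CollectI exI[of _ 0]) simp
next
  fix u v assume "u \<in> {g + b | g b. g \<in> G \<and> nrm b \<le> \<rho>}" "v \<in> {g + b | g b. g \<in> G \<and> nrm b \<le> \<rho>}"
  then obtain g1 b1 g2 b2 where "g1 \<in> G" "g2 \<in> G" "nrm b1 \<le> \<rho>" "nrm b2 \<le> \<rho>" "u = g1 + b1" "v = g2 + b2"
    by blast
  moreover have "u + v = (g1 + g2) + (b1 + b2)" if "u = g1 + b1" "v = g2 + b2"
    using that by (simp add: algebra_simps)
  moreover have "nrm (b1 + b2) \<le> \<rho>" if "nrm b1 \<le> \<rho>" "nrm b2 \<le> \<rho>"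
    using that nrm_add_le[of b1 b2] by simp
  ultimately show "u + v \<in> {g + b | g b. g \<in> G \<and> nrm b \<le> \<rho>}"
    using D_submoduleD(2)[OF G] by blast
next
  fix a u assume a: "av a \<le> 1" and "u \<in> {g + b | g b. g \<in> G \<and> nrm b \<le> \<rho>}"
  then obtain g b where gb: "g \<in> G" "nrm b \<le> \<rho>" "u = g + b"
    by blast
  have "nrm (sc a b) \<le> \<rho>"
    using a gb(2) nrm_nonneg[of b] abs_nonneg[of a] by (simp add: mult_le_one order_trans[OF mult_right_mono])
  then show "sc a u \<in> {g + b | g b. g \<in> G \<and> nrm b \<le> \<rho>}"
    using D_submoduleD(3)[OF G a gb(1)] gb(3)
    by (intro CollectI exI[of _ "sc a g"] exI[of _ "sc a b"]) (simp add: V.scale_right_distrib)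
qed

lemma dominated_graph_line:
  assumes U: "D_submodule av sc U" and x: "x \<notin> U"
    and p: "0 < av p" "\<And>a. av a < 1 \<Longrightarrow> av a \<le> av p"
  shows "dominated_graph U {(sc t x, t / p) | t. True}"
  unfolding dominated_graph_def
proof (intro conjI allI impI)
  show "(0, 0) \<in> {(sc t x, t / p) | t. True}"
    by (auto intro!: exI[of _ 0])
next
  fix v k w l assume "(v, k) \<in> {(sc t x, t / p) | t. True}" "(w, l) \<in> {(sc t x, t / p) | t. True}"
  then obtain t1 t2 where "v = sc t1 x" "k = t1 / p" "w = sc t2 x" "l = t2 / p"
    by blast
  then show "(v + w, k + l) \<in> {(sc t x, t / p) | t. True}"
    by (intro CollectI exI[of _ "t1 + t2"]) (simp add: V.scale_left_distrib add_divide_distrib)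
next
  fix c v k assume "(v, k) \<in> {(sc t x, t / p) | t. True}"
  then obtain t where "v = sc t x" "k = t / p"
    by blast
  then show "(sc c v, c * k) \<in> {(sc t x, t / p) | t. True}"
    by (intro CollectI exI[of _ "c * t"]) simp
next
  fix v k a assume "(v, k) \<in> {(sc t x, t / p) | t. True}" and va: "v \<in> sc a ` U"
  then obtain t where t: "v = sc t x" "k = t / p"
    by blast
  obtain u where u: "u \<in> U" "sc t x = sc a u"
    using va t(1) by (metis imageE)
  show "av k \<le> av a"
  proof (cases "t = 0")
    case False
    then have "x = sc (a / t) u"
      using u(2) by (metis V.scale_scale V.scale_one divide_inverse_commute left_inverse)
    then have "1 < av (a / t)"
      using x D_submoduleD(3)[OF U _ u(1)] by (metis not_less)
    from abs_gt_1_ge_inverse_uniformizer[OF p this] have "1 / av p \<le> av (a / t)" .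
    then show ?thesis
      using t(2) p(1) abs_pos[OF False] by (simp add: field_simps)
  qed (simp add: t abs_nonneg)
qed

lemma dominated_linear_continuous:
  assumes T: "Vector_Spaces.linear sc (*) T" and "0 < \<rho>"
    and ball: "\<And>b. nrm b \<le> \<rho> \<Longrightarrow> b \<in> U"
    and bound: "\<And>x a. x \<in> sc a ` U \<Longrightarrow> av (T x) \<le> av a"
  shows "continuous_on S T"
  unfolding continuous_on_iff
proof (intro ballI allI impI)
  fix y0 and \<epsilon> :: real assume "0 < \<epsilon>"
  then obtain a where a: "0 < av a" "av a < \<epsilon>"
    using exists_abs_less by blast
  then have "a \<noteq> 0"
    by auto
  show "\<exists>d>0. \<forall>y\<in>S. dist y y0 < d \<longrightarrow> dist (T y) (T y0) < \<epsilon>"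
  proof (intro exI[of _ "av a * \<rho>"] conjI ballI impI)
    show "0 < av a * \<rho>"
      using a \<open>0 < \<rho>\<close> by simp
    fix y assume "dist y y0 < av a * \<rho>"
    have "nrm (sc (1 / a) (y - y0)) = nrm (y - y0) / av a"
      by (simp only: nrm_scale abs_divide abs_1) simp
    also have "\<dots> \<le> \<rho>"
      using \<open>dist y y0 < av a * \<rho>\<close> a(1) by (simp add: dist_eq_nrm pos_divide_le_eq mult.commute)
    finally have "nrm (sc (1 / a) (y - y0)) \<le> \<rho>" .
    then have "sc a (sc (1 / a) (y - y0)) \<in> sc a ` U"
      using ball by blast
    then have "av (T (y - y0)) \<le> av a"
      using bound \<open>a \<noteq> 0\<close> by simp
    moreover have "T (y - y0) = T y - T y0"
      using T by (simp add: Vector_Spaces.linear_iff) (metis add_diff_cancel diff_add_cancel)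
    ultimately show "dist (T y) (T y0) < \<epsilon>"
      using a(2) by (simp add: dist_eq_abs)
  qed
qed

lemma exists_thickening_not_mem:
  assumes "closed G" "x \<notin> G"
  obtains \<rho> where "0 < \<rho>" "x \<notin> {g + b | g b. g \<in> G \<and> nrm b \<le> \<rho>}"
proof -
  obtain r where "0 < r" and r: "ball x r \<inter> G = {}"
    using assms by (metis closed_def open_contains_ball_eq ComplI disjoint_eq_subset_Compl)
  have "x \<notin> {g + b | g b. g \<in> G \<and> nrm b \<le> r / 2}"
  proof
    assume "x \<in> {g + b | g b. g \<in> G \<and> nrm b \<le> r / 2}"
    then obtain g b where "g \<in> G" "nrm b \<le> r / 2" "x = g + b"
      by blast
    then have "g \<in> ball x r"
      using \<open>0 < r\<close> by (simp add: dist_eq_nrm)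
    then show False
      using r \<open>g \<in> G\<close> by blast
  qed
  then show ?thesis
    using that[of "r / 2"] \<open>0 < r\<close> by simp
qed

theorem separate_closed_D_submodule:
  assumes "closed G" and G: "D_submodule av sc G" and "x \<notin> G"
  obtains T where "dual_elem sc T" "\<And>g. g \<in> G \<Longrightarrow> av (T g) \<le> 1" "1 < av (T x)"
proof -
  obtain \<rho> where "0 < \<rho>" and x: "x \<notin> {g + b | g b. g \<in> G \<and> nrm b \<le> \<rho>}"
    using exists_thickening_not_mem[OF assms(1,3)] by blast
  define U where "U = {g + b | g b. g \<in> G \<and> nrm b \<le> \<rho>}"
  have U: "D_submodule av sc U"
    unfolding U_def by (rule D_submodule_thicken[OF G]) (use \<open>0 < \<rho>\<close> in simp)
  have x_U: "x \<notin> U"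
    using x unfolding U_def .
  have G_U: "G \<subseteq> U" and ball_U: "\<And>b. nrm b \<le> \<rho> \<Longrightarrow> b \<in> U"
    unfolding U_def using D_submoduleD(1)[OF G] \<open>0 < \<rho>\<close> by force+
  obtain p where p: "0 < av p" "av p < 1" "\<And>a. av a < 1 \<Longrightarrow> av a \<le> av p"
    using exists_uniformizer by blast
  obtain T where T: "Vector_Spaces.linear sc (*) T" and bound: "\<And>y a. y \<in> sc a ` U \<Longrightarrow> av (T y) \<le> av a"
    and "\<And>v k. (v, k) \<in> {(sc t x, t / p) | t. True} \<Longrightarrow> T v = k"
    using nonarch_hahn_banach[OF U dominated_graph_line[OF U x_U p(1,3)]] by blast
  then have "T x = 1 / p"
    by (metis (mono_tags, lifting) V.scale_one mem_Collect_eq)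
  show ?thesis
  proof
    show "dual_elem sc T"
      unfolding dual_elem_def using T dominated_linear_continuous[OF T \<open>0 < \<rho>\<close> ball_U bound] by simp
    show "av (T g) \<le> 1" if "g \<in> G" for g
      using bound[of g 1] G_U that by auto
    show "1 < av (T x)"
      using \<open>T x = 1 / p\<close> p(1,2) by simp
  qed
qed

end

section \<open>Borel sets of products of separable metric spaces\<close>

lemma ball_rational_radius:
  fixes x :: "'a::metric_space"
  assumes "closure C = UNIV" "0 < e"
  obtains d q where "d \<in> C" "q \<in> \<rat>" "x \<in> ball d q" "ball d q \<subseteq> ball x e"
proof -
  obtain q where q: "q \<in> \<rat>" "0 < q" "q < e / 2"
    using Rats_dense_in_real[of 0 "e / 2"] assms(2) by auto
  obtain d where d: "d \<in> C" "dist d x < q"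
    using assms(1) q(2) closure_approachable[of x C] by auto
  have "ball d q \<subseteq> ball x e"
  proof
    fix y assume "y \<in> ball d q"
    then have "dist x y < 2 * q"
      using d(2) dist_triangle3[of x y d] by simp
    then show "y \<in> ball x e"
      using q(3) by simp
  qed
  then show ?thesis
    using that d q by simp
qed

lemma open_prod_rational_rectangle:
  fixes W :: "('a::metric_space \<times> 'b::metric_space) set"
  assumes "closure Ca = UNIV" "closure Cb = UNIV" "open W" "p \<in> W"
  obtains d q d' q' where "d \<in> Ca" "q \<in> \<rat>" "d' \<in> Cb" "q' \<in> \<rat>"
    "p \<in> ball d q \<times> ball d' q'" "ball d q \<times> ball d' q' \<subseteq> W"
proof -
  obtain A B where AB: "open A" "open B" "p \<in> A \<times> B" "A \<times> B \<subseteq> W"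
    using open_prod_elim[OF assms(3,4)] by metis
  obtain e e' where e: "0 < e" "ball (fst p) e \<subseteq> A" "0 < e'" "ball (snd p) e' \<subseteq> B"
    using AB open_contains_ball by (metis mem_Times_iff)
  obtain d q where dq: "d \<in> Ca" "q \<in> \<rat>" "fst p \<in> ball d q" "ball d q \<subseteq> ball (fst p) e"
    using ball_rational_radius[OF assms(1) e(1)] by blast
  obtain d' q' where dq': "d' \<in> Cb" "q' \<in> \<rat>" "snd p \<in> ball d' q'" "ball d' q' \<subseteq> ball (snd p) e'"
    using ball_rational_radius[OF assms(2) e(3)] by blast
  have "ball d q \<times> ball d' q' \<subseteq> W"
    using AB(4) e(2,4) dq(4) dq'(4) by blast
  then show ?thesis
    using that dq dq' by (simp add: mem_Times_iff)
qed

lemma open_in_sets_pair_borel: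
  fixes W :: "('a::metric_space \<times> 'b::metric_space) set"
  assumes "separable_space (euclidean :: 'a topology)" "separable_space (euclidean :: 'b topology)"
    and "open W"
  shows "W \<in> sets (borel \<Otimes>\<^sub>M borel)"
proof -
  obtain Ca :: "'a set" where Ca: "countable Ca" "closure Ca = UNIV"
    using assms(1) unfolding separable_space_def by auto
  obtain Cb :: "'b set" where Cb: "countable Cb" "closure Cb = UNIV"
    using assms(2) unfolding separable_space_def by auto
  define R where "R = {(d, q, d', q') \<in> Ca \<times> \<rat> \<times> Cb \<times> \<rat>. ball d q \<times> ball d' q' \<subseteq> W}"
  have "countable R"
    unfolding R_def by (rule countable_subset[OF _ countable_SIGMA[OF Ca(1) countable_SIGMA[OF countable_rat
          countable_SIGMA[OF Cb(1) countable_rat]]]]) auto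
  have "W = (\<Union>(d, q, d', q')\<in>R. ball d q \<times> ball d' q')"
  proof
    show "W \<subseteq> (\<Union>(d, q, d', q')\<in>R. ball d q \<times> ball d' q')"
    proof
      fix p assume "p \<in> W"
      then obtain d q d' q' where "d \<in> Ca" "q \<in> \<rat>" "d' \<in> Cb" "q' \<in> \<rat>"
        "p \<in> ball d q \<times> ball d' q'" "ball d q \<times> ball d' q' \<subseteq> W"
        using open_prod_rational_rectangle[OF Ca(2) Cb(2) \<open>open W\<close>] by blast
      then show "p \<in> (\<Union>(d, q, d', q')\<in>R. ball d q \<times> ball d' q')"
        unfolding R_def by (intro UN_I[of "(d, q, d', q')"]) auto
    qed
  qed (auto simp: R_def)
  also have "\<dots> \<in> sets (borel \<Otimes>\<^sub>M borel)"
    using \<open>countable R\<close> by (intro sets.countable_UN'') auto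
  finally show ?thesis .
qed

lemma borel_measurable_continuous_on_pair:
  fixes f :: "'a::metric_space \<times> 'b::metric_space \<Rightarrow> 'c::topological_space"
  assumes "separable_space (euclidean :: 'a topology)" "separable_space (euclidean :: 'b topology)"
    and "continuous_on UNIV f"
  shows "f \<in> borel \<Otimes>\<^sub>M borel \<rightarrow>\<^sub>M borel"
proof (rule borel_measurableI)
  fix S :: "'c set" assume "open S"
  then have "open (f -` S)"
    using assms(3) by (simp add: continuous_on_open_vimage)
  then show "f -` S \<inter> space (borel \<Otimes>\<^sub>M borel) \<in> sets (borel \<Otimes>\<^sub>M borel)"
    using open_in_sets_pair_borel[OF assms(1,2)] by (simp add: space_pair_measure)
qed

section \<open>Translation-invariant probability measures\<close>

lemma measurable_add_left:
  fixes N :: "'a::ab_group_add measure"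
  assumes "(\<lambda>(h, k). h + k) \<in> N \<Otimes>\<^sub>M N \<rightarrow>\<^sub>M N" "g \<in> space N"
  shows "(+) g \<in> N \<rightarrow>\<^sub>M N"
  using measurable_compose[OF measurable_Pair[OF measurable_const[OF assms(2)] measurable_ident] assms(1)]
  by simp

lemma nn_integral_indicator_translate:
  fixes N :: "'a::ab_group_add measure"
  assumes \<nu>: "prob_space \<nu>" "sets \<nu> = sets N" and H: "H \<in> sets N" "emeasure \<nu> H = 1"
    and g: "(+) g \<in> N \<rightarrow>\<^sub>M N" "distr \<nu> N ((+) g) = \<nu>" and A: "A \<in> sets N"
  shows "(\<integral>\<^sup>+k. indicator H k * indicator A (g + k) \<partial>\<nu>) = emeasure \<nu> A"
proof -
  interpret prob_space \<nu> by fact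
  have g': "(+) g \<in> \<nu> \<rightarrow>\<^sub>M N"
    using g(1) measurable_cong_sets[OF \<nu>(2) refl] by blast
  have "AE k in \<nu>. k \<in> H"
    using H \<nu>(2) by (simp add: AE_in_set_eq_1 emeasure_eq_measure)
  then have "(\<integral>\<^sup>+k. indicator H k * indicator A (g + k) \<partial>\<nu>) = (\<integral>\<^sup>+k. indicator A (g + k) \<partial>\<nu>)"
    by (intro nn_integral_cong_AE) auto
  also have "\<dots> = (\<integral>\<^sup>+k. indicator A k \<partial>distr \<nu> N ((+) g))"
    using nn_integral_distr[OF g', of "indicator A"] A by simp
  also have "\<dots> = emeasure \<nu> A"
    using A \<nu>(2) g(2) by simp
  finally show ?thesis .
qed

lemma nn_integral_indicator_add:
  fixes N :: "'a::ab_group_add measure"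
  assumes add: "(\<lambda>(h, k). h + k) \<in> N \<Otimes>\<^sub>M N \<rightarrow>\<^sub>M N" and H: "H \<in> sets N" and A: "A \<in> sets N"
    and \<nu>1: "sets \<nu>1 = sets N" "emeasure \<nu>1 H = 1"
    and \<nu>2: "prob_space \<nu>2" "sets \<nu>2 = sets N" "emeasure \<nu>2 H = 1"
      "\<And>g. g \<in> H \<Longrightarrow> distr \<nu>2 N ((+) g) = \<nu>2"
  shows "(\<integral>\<^sup>+h. (\<integral>\<^sup>+k. indicator H h * (indicator H k * indicator A (h + k)) \<partial>\<nu>2) \<partial>\<nu>1) = emeasure \<nu>2 A"
proof -
  have transl: "(+) g \<in> N \<rightarrow>\<^sub>M N" if "g \<in> H" for g
    using measurable_add_left[OF add] H sets.sets_into_space that by blast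
  have "(\<integral>\<^sup>+h. (\<integral>\<^sup>+k. indicator H h * (indicator H k * indicator A (h + k)) \<partial>\<nu>2) \<partial>\<nu>1)
      = (\<integral>\<^sup>+h. indicator H h * emeasure \<nu>2 A \<partial>\<nu>1)"
    using nn_integral_indicator_translate[OF \<nu>2(1,2) H \<nu>2(3) transl \<nu>2(4) A]
    by (intro nn_integral_cong) (simp add: nn_integral_cmult indicator_def)
  also have "\<dots> = emeasure \<nu>2 A"
    using H \<nu>1 by (simp add: nn_integral_multc mult.commute)
  finally show ?thesis .
qed

text \<open>Uniqueness of Haar measure, by computing \<open>\<integral>\<integral> 1\<^sub>H(h) 1\<^sub>H(k) 1\<^sub>A(h + k)\<close> in both orders.\<close>
theorem translation_invariant_prob_unique:
  fixes N :: "'a::ab_group_add measure"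
  assumes add: "(\<lambda>(h, k). h + k) \<in> N \<Otimes>\<^sub>M N \<rightarrow>\<^sub>M N" and H: "H \<in> sets N"
    and \<nu>1: "prob_space \<nu>1" "sets \<nu>1 = sets N" "emeasure \<nu>1 H = 1"
      "\<And>g. g \<in> H \<Longrightarrow> distr \<nu>1 N ((+) g) = \<nu>1"
    and \<nu>2: "prob_space \<nu>2" "sets \<nu>2 = sets N" "emeasure \<nu>2 H = 1"
      "\<And>g. g \<in> H \<Longrightarrow> distr \<nu>2 N ((+) g) = \<nu>2"
  shows "\<nu>1 = \<nu>2"
proof (rule measure_eqI)
  show "sets \<nu>1 = sets \<nu>2"
    using \<nu>1(2) \<nu>2(2) by simp
  fix A assume "A \<in> sets \<nu>1"
  then have A: "A \<in> sets N"
    using \<nu>1(2) by simp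
  interpret p1: prob_space \<nu>1 by fact
  interpret p2: prob_space \<nu>2 by fact
  interpret pair_sigma_finite \<nu>1 \<nu>2
    by (simp add: pair_sigma_finite_def p1.sigma_finite_measure_axioms p2.sigma_finite_measure_axioms)
  define F where "F h k = indicator H h * (indicator H k * indicator A (h + k) :: ennreal)" for h k
  have "case_prod F \<in> borel_measurable (N \<Otimes>\<^sub>M N)"
    unfolding F_def using H A add by measurable
  then have F: "case_prod F \<in> borel_measurable (\<nu>1 \<Otimes>\<^sub>M \<nu>2)"
    using measurable_cong_sets[OF sets_pair_measure_cong[OF \<nu>1(2) \<nu>2(2)] refl] by blast
  have swap: "F h k = indicator H k * (indicator H h * indicator A (k + h))" for h k
    unfolding F_def by (simp add: add.commute mult.left_commute)
  have "(\<integral>\<^sup>+h. (\<integral>\<^sup>+k. F h k \<partial>\<nu>2) \<partial>\<nu>1) = emeasure \<nu>2 A"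
    unfolding F_def by (rule nn_integral_indicator_add[OF add H A \<nu>1(2,3) \<nu>2])
  moreover have "(\<integral>\<^sup>+k. (\<integral>\<^sup>+h. F h k \<partial>\<nu>1) \<partial>\<nu>2) = emeasure \<nu>1 A"
    unfolding swap by (rule nn_integral_indicator_add[OF add H A \<nu>2(2,3) \<nu>1])
  ultimately show "emeasure \<nu>1 A = emeasure \<nu>2 A"
    using Fubini'[OF F] by simp
qed

lemma distr_additive_translation_invariant:
  fixes N :: "'a::ab_group_add measure"
  assumes add: "(\<lambda>(h, k). h + k) \<in> N \<Otimes>\<^sub>M N \<rightarrow>\<^sub>M N" and H: "H \<in> sets N"
    and \<nu>: "prob_space \<nu>" "sets \<nu> = sets N" "emeasure \<nu> H = 1"
      "\<And>g. g \<in> H \<Longrightarrow> distr \<nu> N ((+) g) = \<nu>"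
    and \<phi>: "\<phi> \<in> N \<rightarrow>\<^sub>M N" "\<And>x y. \<phi> (x + y) = \<phi> x + \<phi> y" "\<phi> ` H = H"
  shows "distr \<nu> N \<phi> = \<nu>"
proof (rule translation_invariant_prob_unique[OF add H _ _ _ _ \<nu>])
  interpret prob_space \<nu> by fact
  have \<phi>': "\<phi> \<in> \<nu> \<rightarrow>\<^sub>M N"
    using \<phi>(1) measurable_cong_sets[OF \<nu>(2) refl] by blast
  show "prob_space (distr \<nu> N \<phi>)"
    by (rule prob_space_distr[OF \<phi>'])
  show "sets (distr \<nu> N \<phi>) = sets N"
    by simp
  have "H \<subseteq> \<phi> -` H \<inter> space \<nu>"
    using \<phi>(3) H \<nu>(2) sets.sets_into_space sets_eq_imp_space_eq by fastforce
  then have "1 \<le> emeasure (distr \<nu> N \<phi>) H"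
    using \<nu>(3) H \<phi>' by (metis emeasure_distr emeasure_mono measurable_sets)
  then show "emeasure (distr \<nu> N \<phi>) H = 1"
    using prob_space.emeasure_le_1[OF prob_space_distr[OF \<phi>']] antisym by blast
  fix g assume "g \<in> H"
  then obtain h where h: "h \<in> H" "g = \<phi> h"
    using \<phi>(3) by blast
  have transl: "(+) x \<in> N \<rightarrow>\<^sub>M N" if "x \<in> H" for x
    using measurable_add_left[OF add] H sets.sets_into_space that by blast
  have h': "(+) h \<in> \<nu> \<rightarrow>\<^sub>M N"
    using transl[OF h(1)] measurable_cong_sets[OF \<nu>(2) refl] by blast
  have "distr (distr \<nu> N \<phi>) N ((+) g) = distr \<nu> N ((+) (\<phi> h) \<circ> \<phi>)"
    using distr_distr[OF transl[OF \<open>g \<in> H\<close>] \<phi>'] h(2) by simp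
  also have "(+) (\<phi> h) \<circ> \<phi> = \<phi> \<circ> (+) h"
    using \<phi>(2) by (auto simp: fun_eq_iff)
  also have "distr \<nu> N (\<phi> \<circ> (+) h) = distr (distr \<nu> N ((+) h)) N \<phi>"
    by (rule distr_distr[OF \<phi>(1) h', symmetric])
  finally show "distr (distr \<nu> N \<phi>) N ((+) g) = distr \<nu> N \<phi>"
    using \<nu>(4)[OF h(1)] by simp
qed

lemma normalised_haar_prob_space: "normalised_haar G \<mu> \<Longrightarrow> prob_space \<mu>"
  unfolding normalised_haar_def
  by (intro prob_spaceI) (metis sets_eq_imp_space_eq space_borel)

lemma Int_vimage_add_left:
  fixes G :: "'a::ab_group_add set"
  assumes G: "\<And>x y. x \<in> G \<Longrightarrow> y \<in> G \<Longrightarrow> x + y \<in> G" "\<And>x. x \<in> G \<Longrightarrow> - x \<in> G"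
    and "g \<in> G"
  shows "G \<inter> (+) g -` A = (+) (- g) ` (A \<inter> G)"
proof
  show "G \<inter> (+) g -` A \<subseteq> (+) (- g) ` (A \<inter> G)"
  proof
    fix x assume "x \<in> G \<inter> (+) g -` A"
    then have "g + x \<in> A \<inter> G" and "x = - g + (g + x)"
      using G(1) \<open>g \<in> G\<close> by auto
    then show "x \<in> (+) (- g) ` (A \<inter> G)"
      by blast
  qed
  show "(+) (- g) ` (A \<inter> G) \<subseteq> G \<inter> (+) g -` A"
    using G(1)[OF _ G(2)[OF \<open>g \<in> G\<close>]] by auto
qed

lemma normalised_haar_translate:
  fixes G :: "'a::{ab_group_add,metric_space} set"
  assumes \<mu>: "normalised_haar G \<mu>" and "G \<in> sets borel"
    and G: "\<And>x y. x \<in> G \<Longrightarrow> y \<in> G \<Longrightarrow> x + y \<in> G" "\<And>x. x \<in> G \<Longrightarrow> - x \<in> G"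
    and transl: "\<And>x::'a. (+) x \<in> borel \<rightarrow>\<^sub>M borel" and "g \<in> G"
  shows "distr \<mu> borel ((+) g) = \<mu>"
proof (rule measure_eqI)
  interpret prob_space \<mu>
    by (rule normalised_haar_prob_space[OF \<mu>])
  have sets_\<mu>: "sets \<mu> = sets borel" and "emeasure \<mu> G = 1"
    and inv: "\<And>g A. g \<in> G \<Longrightarrow> A \<in> sets borel \<Longrightarrow> A \<subseteq> G \<Longrightarrow> emeasure \<mu> ((+) g ` A) = emeasure \<mu> A"
    using \<mu> unfolding normalised_haar_def by auto
  have full: "emeasure \<mu> (G \<inter> B) = emeasure \<mu> B" if "B \<in> sets borel" for B
  proof -
    have "AE x in \<mu>. x \<in> G"
      using \<open>G \<in> sets borel\<close> \<open>emeasure \<mu> G = 1\<close> sets_\<mu> by (simp add: AE_in_set_eq_1 emeasure_eq_measure)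
    then show ?thesis
      using that \<open>G \<in> sets borel\<close> sets_\<mu> by (intro emeasure_eq_AE) auto
  qed
  show "sets (distr \<mu> borel ((+) g)) = sets \<mu>"
    using sets_\<mu> by simp
  fix A assume "A \<in> sets (distr \<mu> borel ((+) g))"
  then have A: "A \<in> sets borel"
    by simp
  have "emeasure \<mu> (G \<inter> (+) g -` A) = emeasure \<mu> (A \<inter> G)"
    using inv[OF G(2)[OF \<open>g \<in> G\<close>]] A \<open>G \<in> sets borel\<close> Int_vimage_add_left[OF G \<open>g \<in> G\<close>]
    by auto
  moreover have "(+) g -` A \<in> sets borel"
    using measurable_sets[OF transl A] by simp
  ultimately show "emeasure (distr \<mu> borel ((+) g)) A = emeasure \<mu> A"
    using A transl sets_\<mu> full[of "(+) g -` A"] full[of A]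
    by (simp add: emeasure_distr measurable_cong_sets[OF sets_\<mu> refl] Int_commute)
qed

lemma Int_ball_translate:
  fixes G :: "'a::{ab_group_add,metric_space} set"
  assumes G: "\<And>x y. x \<in> G \<Longrightarrow> y \<in> G \<Longrightarrow> x + y \<in> G" "\<And>x. x \<in> G \<Longrightarrow> - x \<in> G"
    and isometry: "\<And>g x y::'a. dist (g + x) (g + y) = dist x y"
    and "x \<in> G" "g \<in> G"
  shows "G \<inter> ball g r = (+) (g - x) ` (G \<inter> ball x r)"
proof
  have gx: "g - x \<in> G"
    using G \<open>x \<in> G\<close> \<open>g \<in> G\<close> by (metis diff_conv_add_uminus)
  show "(+) (g - x) ` (G \<inter> ball x r) \<subseteq> G \<inter> ball g r"
    using G(1)[OF gx] isometry[of "g - x" x] by (auto simp: dist_commute)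
  show "G \<inter> ball g r \<subseteq> (+) (g - x) ` (G \<inter> ball x r)"
  proof
    fix z assume z: "z \<in> G \<inter> ball g r"
    have "z - (g - x) \<in> G"
      using G z gx by (metis diff_conv_add_uminus IntD1)
    moreover have "dist x (z - (g - x)) = dist g z"
      using isometry[of "g - x" x "z - (g - x)"] by simp
    ultimately show "z \<in> (+) (g - x) ` (G \<inter> ball x r)"
      using z by (intro image_eqI[of _ _ "z - (g - x)"]) auto
  qed
qed

text \<open>Finitely many translates of the ball cover the compact group \<open>G\<close>, and they all have the
  same measure.\<close>
lemma normalised_haar_ball_pos:
  fixes G :: "'a::{ab_group_add,metric_space} set"
  assumes \<mu>: "normalised_haar G \<mu>" and "compact G"
    and G: "\<And>x y. x \<in> G \<Longrightarrow> y \<in> G \<Longrightarrow> x + y \<in> G" "\<And>x. x \<in> G \<Longrightarrow> - x \<in> G"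
    and isometry: "\<And>g x y::'a. dist (g + x) (g + y) = dist x y"
    and "x \<in> G" "0 < r"
  shows "emeasure \<mu> (ball x r) \<noteq> 0"
proof
  assume null: "emeasure \<mu> (ball x r) = 0"
  have sets_\<mu>: "sets \<mu> = sets borel" and "emeasure \<mu> G = 1"
    and inv: "\<And>g A. g \<in> G \<Longrightarrow> A \<in> sets borel \<Longrightarrow> A \<subseteq> G \<Longrightarrow> emeasure \<mu> ((+) g ` A) = emeasure \<mu> A"
    using \<mu> unfolding normalised_haar_def by auto
  have G_borel: "G \<in> sets borel"
    using \<open>compact G\<close> by (simp add: borel_closed compact_imp_closed)
  obtain F where F: "F \<subseteq> G" "finite F" "G \<subseteq> (\<Union>g\<in>F. ball g r)"
    using compactE_image[OF \<open>compact G\<close>, of G "\<lambda>g. ball g r"] \<open>0 < r\<close> by force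
  have "G \<inter> ball g r \<in> null_sets \<mu>" if "g \<in> F" for g
  proof -
    have "g \<in> G"
      using F(1) that by blast
    then have "G \<inter> ball g r = (+) (g - x) ` (G \<inter> ball x r)"
      using Int_ball_translate[OF G isometry \<open>x \<in> G\<close>] by blast
    moreover have "g - x \<in> G"
      using G \<open>x \<in> G\<close> \<open>g \<in> G\<close> by (metis diff_conv_add_uminus)
    ultimately have "emeasure \<mu> (G \<inter> ball g r) = emeasure \<mu> (G \<inter> ball x r)"
      using inv[of "g - x" "G \<inter> ball x r"] G_borel by (simp add: borel_open sets.Int)
    also have "\<dots> = 0"
      using emeasure_eq_0[OF _ null Int_lower2] sets_\<mu> by (simp add: borel_open)
    finally show ?thesis
      using G_borel sets_\<mu> by (simp add: null_setsI borel_open)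
  qed
  then have "(\<Union>g\<in>F. G \<inter> ball g r) \<in> null_sets \<mu>"
    using F(2) by (intro null_sets_UN') (auto intro: countable_finite)
  moreover have "G = (\<Union>g\<in>F. G \<inter> ball g r)"
    using F(3) by blast
  ultimately show False
    using \<open>emeasure \<mu> G = 1\<close> by (metis null_setsD1 zero_neq_one)
qed

lemma esssup_ge_if_emeasure_pos:
  assumes "{\<omega> \<in> space M. c \<le> f \<omega>} \<in> sets M" "emeasure M {\<omega> \<in> space M. c \<le> f \<omega>} \<noteq> 0"
  shows "c \<le> esssup M f"
proof (rule ccontr)
  assume less: "\<not> c \<le> esssup M f"
  have "AE \<omega> in M. \<not> c \<le> f \<omega>"
    using esssup_AE[of f M] by eventually_elim (use less in auto)
  then show False
    using assms AE_iff_measurable[OF assms(1)] by auto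
qed

section \<open>Haar measure on compact \<open>D\<close>-submodules\<close>

context nonarch_banach
begin

lemma measurable_add_borel: "(\<lambda>(x, y). x + y) \<in> borel \<Otimes>\<^sub>M borel \<rightarrow>\<^sub>M (borel :: 'e measure)"
  using borel_measurable_continuous_on_pair[OF separable separable continuous_on_lincomb[where a = 1 and b = 1]]
  by (simp add: case_prod_beta')

lemma measurable_lincomb_borel:
  "(\<lambda>p. sc a (fst p) + sc b (snd p)) \<in> borel \<Otimes>\<^sub>M borel \<rightarrow>\<^sub>M (borel :: 'e measure)"
  by (rule borel_measurable_continuous_on_pair[OF separable separable continuous_on_lincomb])

lemma measurable_add_left_borel: "(+) g \<in> borel \<rightarrow>\<^sub>M (borel :: 'e measure)"
  by (rule borel_measurable_continuous_onI[OF continuous_on_add_left])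

lemma measurable_add_pair_borel:
  "(\<lambda>(h, k). h + k) \<in> (borel \<Otimes>\<^sub>M borel) \<Otimes>\<^sub>M (borel \<Otimes>\<^sub>M borel) \<rightarrow>\<^sub>M (borel \<Otimes>\<^sub>M borel :: ('e \<times> 'e) measure)"
proof -
  have "(\<lambda>z. (fst (fst z) + fst (snd z), snd (fst z) + snd (snd z)))
      \<in> (borel \<Otimes>\<^sub>M borel) \<Otimes>\<^sub>M (borel \<Otimes>\<^sub>M borel) \<rightarrow>\<^sub>M (borel \<Otimes>\<^sub>M borel :: ('e \<times> 'e) measure)"
    using measurable_add_borel by measurable
  then show ?thesis
    by (simp add: case_prod_beta' plus_prod_def)
qed

lemma normalised_haar_translate_D_submodule:
  assumes "compact G" "D_submodule av sc G" "normalised_haar G \<mu>" "g \<in> G"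
  shows "distr \<mu> borel ((+) g) = \<mu>"
  using assms D_submoduleD(2)[OF assms(2)] D_submodule_uminus[OF assms(2)]
  by (intro normalised_haar_translate[OF assms(3)] measurable_add_left_borel)
    (auto simp: borel_closed compact_imp_closed)

lemma normalised_haar_pair_translate:
  assumes G: "compact G" "D_submodule av sc G" and \<mu>: "normalised_haar G \<mu>" and g: "g \<in> G \<times> G"
  shows "distr (\<mu> \<Otimes>\<^sub>M \<mu>) (borel \<Otimes>\<^sub>M borel) ((+) g) = \<mu> \<Otimes>\<^sub>M \<mu>"
proof -
  interpret prob_space \<mu>
    by (rule normalised_haar_prob_space[OF \<mu>])
  have sets_\<mu>: "sets \<mu> = sets borel"
    using \<mu> unfolding normalised_haar_def by simp
  have "(+) x \<in> \<mu> \<rightarrow>\<^sub>M borel" for x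
    using measurable_add_left_borel measurable_cong_sets[OF sets_\<mu> refl] by blast
  moreover have invariant: "distr \<mu> borel ((+) (fst g)) = \<mu>" "distr \<mu> borel ((+) (snd g)) = \<mu>"
    using normalised_haar_translate_D_submodule[OF G \<mu>] g by (auto simp: mem_Times_iff)
  ultimately have "distr \<mu> borel ((+) (fst g)) \<Otimes>\<^sub>M distr \<mu> borel ((+) (snd g))
      = distr (\<mu> \<Otimes>\<^sub>M \<mu>) (borel \<Otimes>\<^sub>M borel) (\<lambda>(x, y). (fst g + x, snd g + y))"
    by (intro pair_measure_distr) (simp_all add: sigma_finite_measure_axioms)
  moreover have "(\<lambda>(x, y). (fst g + x, snd g + y)) = (+) g"
    by (auto simp: fun_eq_iff plus_prod_def)
  ultimately show ?thesis
    using invariant by simp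
qed

theorem normalised_haar_K_gaussian:
  assumes G: "compact G" "D_submodule av sc G" and \<mu>: "normalised_haar G \<mu>"
    and o: "orthonormal2 av (a11, a12) (a21, a22)"
  shows "distr (\<mu> \<Otimes>\<^sub>M \<mu>) (borel \<Otimes>\<^sub>M borel) (\<lambda>(x, y). (sc a11 x + sc a12 y, sc a21 x + sc a22 y))
    = \<mu> \<Otimes>\<^sub>M \<mu>"
proof (rule distr_additive_translation_invariant[OF measurable_add_pair_borel])
  interpret prob_space \<mu>
    by (rule normalised_haar_prob_space[OF \<mu>])
  have sets_\<mu>: "sets \<mu> = sets borel" and "emeasure \<mu> G = 1"
    using \<mu> unfolding normalised_haar_def by simp_all
  have "G \<in> sets borel"
    using G(1) by (simp add: borel_closed compact_imp_closed)
  then show "G \<times> G \<in> sets (borel \<Otimes>\<^sub>M borel)"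
    by simp
  show "prob_space (\<mu> \<Otimes>\<^sub>M \<mu>)"
    by (intro prob_space_pair prob_space_axioms)
  show "sets (\<mu> \<Otimes>\<^sub>M \<mu>) = sets (borel \<Otimes>\<^sub>M borel)"
    by (intro sets_pair_measure_cong sets_\<mu>)
  show "emeasure (\<mu> \<Otimes>\<^sub>M \<mu>) (G \<times> G) = 1"
    using \<open>G \<in> sets borel\<close> \<open>emeasure \<mu> G = 1\<close> sets_\<mu> by (simp add: emeasure_pair_measure_Times)
  show "distr (\<mu> \<Otimes>\<^sub>M \<mu>) (borel \<Otimes>\<^sub>M borel) ((+) g) = \<mu> \<Otimes>\<^sub>M \<mu>" if "g \<in> G \<times> G" for g
    by (rule normalised_haar_pair_translate[OF G \<mu> that])
  show "(\<lambda>(x, y). (sc a11 x + sc a12 y, sc a21 x + sc a22 y)) \<in> borel \<Otimes>\<^sub>M borel \<rightarrow>\<^sub>M borel \<Otimes>\<^sub>M borel"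
    using measurable_lincomb_borel[of a11 a12] measurable_lincomb_borel[of a21 a22]
    by (auto intro: measurable_Pair simp: case_prod_beta')
  show "(\<lambda>(x, y). (sc a11 x + sc a12 y, sc a21 x + sc a22 y)) (p + q)
      = (\<lambda>(x, y). (sc a11 x + sc a12 y, sc a21 x + sc a22 y)) p
        + (\<lambda>(x, y). (sc a11 x + sc a12 y, sc a21 x + sc a22 y)) q" for p q
    by (simp add: case_prod_beta' V.scale_right_distrib algebra_simps)
  show "(\<lambda>(x, y). (sc a11 x + sc a12 y, sc a21 x + sc a22 y)) ` (G \<times> G) = G \<times> G"
    by (rule orthonormal2_image_D_submodule[OF G(2) o])
qed

lemma dual_elem_continuous_abs:
  assumes "dual_elem sc T"
  shows "(\<lambda>y. av (T y)) \<in> borel_measurable borel"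
proof -
  have "continuous_on UNIV T"
    using assms unfolding dual_elem_def by simp
  then show ?thesis
    using continuous_on_compose2[OF continuous_on_abs] by (intro borel_measurable_continuous_onI) auto
qed

text \<open>Near a point \<open>x\<close> with \<open>T x \<noteq> 0\<close>, the ultrametric inequality makes \<open>\<bar>T\<bar>\<close> constant.\<close>
lemma dual_elem_abs_ge_near:
  assumes T: "dual_elem sc T"
  obtains r where "0 < r" "ball x r \<subseteq> {y. av (T x) \<le> av (T y)}"
proof (cases "T x = 0")
  case True
  then show ?thesis
    using that[of 1] abs_nonneg by auto
next
  case False
  have "continuous_on UNIV T"
    using T unfolding dual_elem_def by simp
  moreover have "0 < av (T x)"
    using False by (simp add: abs_pos)
  ultimately obtain r where "0 < r" and r: "\<And>y. dist y x < r \<Longrightarrow> dist (T y) (T x) < av (T x)"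
    unfolding continuous_on_iff by blast
  have "av (T x) \<le> av (T y)" if "y \<in> ball x r" for y
  proof -
    have "av (T y - T x) < av (T x)"
      using r[of y] that by (simp add: dist_eq_abs dist_commute)
    then show ?thesis
      using abs_add_eq_dominant[of "T y - T x" "T x"] by simp
  qed
  then show ?thesis
    using that \<open>0 < r\<close> by blast
qed

lemma esssup_dual_ge:
  assumes G: "compact G" "D_submodule av sc G" and X: "X \<in> borel_measurable M"
    and \<mu>: "normalised_haar G (distr M borel X)" and "x \<in> G" and T: "dual_elem sc T"
  shows "ereal (av (T x)) \<le> esssup M (\<lambda>\<omega>. ereal (av (T (X \<omega>))))"
proof -
  let ?S = "{y. av (T x) \<le> av (T y)}"
  obtain r where "0 < r" and r: "ball x r \<subseteq> ?S"
    using dual_elem_abs_ge_near[OF T] by blast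
  have S: "?S \<in> sets borel"
    using dual_elem_continuous_abs[OF T] by measurable
  have "emeasure (distr M borel X) (ball x r) \<noteq> 0"
    using D_submoduleD(2)[OF G(2)] D_submodule_uminus[OF G(2)]
    by (intro normalised_haar_ball_pos[OF \<mu> G(1) _ _ dist_add_left \<open>x \<in> G\<close> \<open>0 < r\<close>])
  then have "emeasure (distr M borel X) ?S \<noteq> 0"
    using emeasure_mono[OF r] S by (metis le_zero_eq sets_distr)
  moreover have "X -` ?S \<inter> space M = {\<omega> \<in> space M. ereal (av (T x)) \<le> ereal (av (T (X \<omega>)))}"
    by auto
  ultimately show ?thesis
    using S X measurable_sets[OF X S] by (intro esssup_ge_if_emeasure_pos) (auto simp: emeasure_distr)
qed

lemma esssup_dual_le_1:
  assumes "closed G" and M: "prob_space M" and X: "X \<in> borel_measurable M"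
    and \<mu>: "normalised_haar G (distr M borel X)"
    and T: "dual_elem sc T" "\<And>g. g \<in> G \<Longrightarrow> av (T g) \<le> 1"
  shows "esssup M (\<lambda>\<omega>. ereal (av (T (X \<omega>)))) \<le> 1"
proof (rule esssup_I)
  interpret prob_space M by fact
  show "(\<lambda>\<omega>. ereal (av (T (X \<omega>)))) \<in> borel_measurable M"
    using measurable_compose[OF X dual_elem_continuous_abs[OF T(1)]] by simp
  have "G \<in> sets borel"
    using \<open>closed G\<close> by (simp add: borel_closed)
  then have "prob (X -` G \<inter> space M) = 1"
    using \<mu> X unfolding normalised_haar_def by (simp add: emeasure_distr emeasure_eq_measure)
  then have "AE \<omega> in M. X \<omega> \<in> G"
    using AE_in_set_eq_1[OF measurable_sets[OF X \<open>G \<in> sets borel\<close>]] by auto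
  then show "AE \<omega> in M. ereal (av (T (X \<omega>))) \<le> 1"
    by eventually_elim (use T(2) in auto)
qed

theorem normalised_haar_dual_characterisation:
  assumes G: "compact G" "D_submodule av sc G" and M: "prob_space M" "X \<in> borel_measurable M"
    and \<mu>: "normalised_haar G (distr M borel X)"
  shows "G = {x. \<forall>T. dual_elem sc T \<longrightarrow> ereal (av (T x)) \<le> esssup M (\<lambda>\<omega>. ereal (av (T (X \<omega>))))}"
proof (intro equalityI subsetI)
  fix x assume "x \<in> G"
  then show "x \<in> {x. \<forall>T. dual_elem sc T \<longrightarrow> ereal (av (T x)) \<le> esssup M (\<lambda>\<omega>. ereal (av (T (X \<omega>))))}"
    using esssup_dual_ge[OF G M(2) \<mu>] by blast
next
  fix x assume "x \<in> {x. \<forall>T. dual_elem sc T \<longrightarrow> ereal (av (T x)) \<le> esssup M (\<lambda>\<omega>. ereal (av (T (X \<omega>))))}"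
  then have bounded: "\<And>T. dual_elem sc T \<Longrightarrow> ereal (av (T x)) \<le> esssup M (\<lambda>\<omega>. ereal (av (T (X \<omega>))))"
    by blast
  show "x \<in> G"
  proof (rule ccontr)
    assume "x \<notin> G"
    obtain T where T: "dual_elem sc T" "\<And>g. g \<in> G \<Longrightarrow> av (T g) \<le> 1" "1 < av (T x)"
      using separate_closed_D_submodule[OF compact_imp_closed[OF G(1)] G(2) \<open>x \<notin> G\<close>] by blast
    have "ereal (av (T x)) \<le> 1"
      using bounded[OF T(1)] esssup_dual_le_1[OF compact_imp_closed[OF G(1)] M \<mu> T(1,2)] by (rule order_trans)
    then show False
      using T(3) by simp
  qed
qed

end

theorem theorem4p7:
  fixes av :: "'k::{field,metric_space} \<Rightarrow> real"
    and sc :: "'k \<Rightarrow> 'e::{ab_group_add,metric_space} \<Rightarrow> 'e"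
    and nrm :: "'e \<Rightarrow> real"
    and G :: "'e set"
    and M :: "'w measure"
    and X :: "'w \<Rightarrow> 'e"
  assumes "local_field av"
    and "separable_banach av sc nrm"
    and "compact G"
    and "D_submodule av sc G"
    and "prob_space M"
    and "X \<in> borel_measurable M"
    and "normalised_haar G (distr M borel X)"
  shows "K_gaussian av sc M X \<and>
    G = {x. \<forall>T. dual_elem sc T \<longrightarrow>
               ereal (av (T x)) \<le> esssup M (\<lambda>\<omega>. ereal (av (T (X \<omega>))))}"
proof -
  interpret nonarch_banach av sc nrm
    by (intro nonarch_banach.intro local_valued_field.intro nonarch_banach_axioms.intro assms(1,2))
  have "K_gaussian av sc M X"
    unfolding K_gaussian_def Let_def using normalised_haar_K_gaussian[OF assms(3,4,7)] by blast
  then show ?thesis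
    using normalised_haar_dual_characterisation[OF assms(3-7)] by blast
qed

end
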